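(* Let $U\subset\mathbb{R}^d$ be open and let $F,G:U\times[0,\infty)\to\mathbb{R}$ be, respectively, upper and lower semicontinuous. Assume that for a fixed $C>0$ and all $(x,t)\in U\times[0,\infty)$, $F(x,t)\le Ct$ and $G(x,t)\ge-Ct$, and that $\min(F_t,F)\le0$ and $\max(G_t,G)\ge0$ in the viscosity sense (in $U\times(0,\infty)$). Then $F\le0$ and $G\ge0$ on $U\times[0,\infty)$.
   Context: $\min(F_t,F)\le0$ in the viscosity sense means: whenever $\psi$ is smooth near a point $(x_0,t_0)$ (and Lipschitz elsewhere) and $F-\psi$ attains a (global) maximum value $0$ at $(x_0,t_0)$, then $F(x_0,t_0)\le0$ or $\psi_t(x_0,t_0)\le0$. $\max(G_t,G)\ge0$ in the viscosity sense means: whenever $\psi$ is such a test function and $G-\psi$ attains a (global) minimum value $0$ at $(x_0,t_0)$, then $G(x_0,t_0)\ge0$ or $\psi_t(x_0,t_0)\ge0$. *)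

theory Defs
  imports "HOL-Analysis.Analysis"
begin

definition upper_semicontinuous_on :: "'a::topological_space set \<Rightarrow> ('a \<Rightarrow> real) \<Rightarrow> bool" where
  "upper_semicontinuous_on S f \<longleftrightarrow>
     (\<forall>x\<in>S. \<forall>a. f x < a \<longrightarrow> (\<forall>\<^sub>F y in at x within S. f y < a))"

definition lower_semicontinuous_on :: "'a::topological_space set \<Rightarrow> ('a \<Rightarrow> real) \<Rightarrow> bool" where
  "lower_semicontinuous_on S f \<longleftrightarrow>
     (\<forall>x\<in>S. \<forall>a. a < f x \<longrightarrow> (\<forall>\<^sub>F y in at x within S. a < f y))"

definition pderiv_dir :: "'a::euclidean_space \<Rightarrow> ('a \<Rightarrow> real) \<Rightarrow> 'a \<Rightarrow> real" where
  "pderiv_dir v f x = deriv (\<lambda>s. f (x + s *\<^sub>R v)) 0"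

fun iter_pderiv :: "'a::euclidean_space list \<Rightarrow> ('a \<Rightarrow> real) \<Rightarrow> 'a \<Rightarrow> real" where
  "iter_pderiv [] f = f"
| "iter_pderiv (v # vs) f = pderiv_dir v (iter_pderiv vs f)"

definition smooth_on :: "'a::euclidean_space set \<Rightarrow> ('a \<Rightarrow> real) \<Rightarrow> bool" where
  "smooth_on N f \<longleftrightarrow>
     (\<forall>vs. set vs \<subseteq> Basis \<longrightarrow>
        continuous_on N (iter_pderiv vs f) \<and>
        (\<forall>v\<in>Basis. \<forall>x\<in>N. (\<lambda>s. iter_pderiv vs f (x + s *\<^sub>R v)) differentiable (at 0)))"

definition test_fun :: "('a::euclidean_space) set \<Rightarrow> 'a \<Rightarrow> ('a \<Rightarrow> real) \<Rightarrow> bool" where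
  "test_fun D p \<psi> \<longleftrightarrow>
     (\<exists>N. open N \<and> p \<in> N \<and> smooth_on N \<psi> \<and> (\<exists>L. L-lipschitz_on (D - N) \<psi>))"

definition visc_min_sub :: "(real^'d) set \<Rightarrow> (real^'d \<Rightarrow> real \<Rightarrow> real) \<Rightarrow> bool" where
  "visc_min_sub U F \<longleftrightarrow>
     (\<forall>x0 t0 \<psi>. x0 \<in> U \<longrightarrow> 0 < t0 \<longrightarrow> test_fun (U \<times> {0..}) (x0, t0) \<psi> \<longrightarrow>
        (\<forall>x\<in>U. \<forall>t\<ge>0. F x t - \<psi> (x, t) \<le> 0) \<longrightarrow> F x0 t0 - \<psi> (x0, t0) = 0 \<longrightarrow>
        F x0 t0 \<le> 0 \<or> deriv (\<lambda>s. \<psi> (x0, s)) t0 \<le> 0)"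

definition visc_max_super :: "(real^'d) set \<Rightarrow> (real^'d \<Rightarrow> real \<Rightarrow> real) \<Rightarrow> bool" where
  "visc_max_super U G \<longleftrightarrow>
     (\<forall>x0 t0 \<psi>. x0 \<in> U \<longrightarrow> 0 < t0 \<longrightarrow> test_fun (U \<times> {0..}) (x0, t0) \<psi> \<longrightarrow>
        (\<forall>x\<in>U. \<forall>t\<ge>0. G x t - \<psi> (x, t) \<ge> 0) \<longrightarrow> G x0 t0 - \<psi> (x0, t0) = 0 \<longrightarrow>
        G x0 t0 \<ge> 0 \<or> deriv (\<lambda>s. \<psi> (x0, s)) t0 \<ge> 0)"

end

theory Submission imports Defs begin

(* If F(x0,t0) = \<delta> > 0, subtract the penalty \<beta> t\<^sup>2 + K |x - x0|\<^sup>2 with \<beta> = \<delta> / (2 t0\<^sup>2) and K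
   large. The growth bound F \<le> C t makes the penalized function nonpositive outside a compact
   cylinder, while it equals \<delta>/2 at (x0,t0); by upper semicontinuity it attains a positive global
   maximum m at some (x1,t1), and t1 > 0 because F \<le> 0 at t = 0. The paraboloid m + penalty
   touches F from above at (x1,t1), yet there both F and its time derivative 2 \<beta> t1 are positive,
   contradicting min(F_t, F) \<le> 0. The statement for G follows by applying this to -G. *)

definition quad_fun :: "real \<Rightarrow> ('a::real_inner \<times> real) \<Rightarrow> real \<Rightarrow> real \<Rightarrow> ('a \<times> real) \<Rightarrow> real" where
  "quad_fun c w b k z = c + inner w z + b * (snd z)^2 + k * inner (fst z) (fst z)"

lemma quad_fun_line:
  "quad_fun c w b k (z + s *\<^sub>R v) =
     quad_fun c w b k z + s * (inner w v + 2*b * snd z * snd v + 2*k * inner (fst z) (fst v))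
     + s^2 * (b * (snd v)^2 + k * inner (fst v) (fst v))"
  by (simp add: quad_fun_def inner_add_left inner_add_right algebra_simps power2_eq_square inner_commute)

lemma has_real_derivative_quad_fun_line:
  "((\<lambda>s. quad_fun c w b k (z + s *\<^sub>R v)) has_real_derivative
     (inner w v + 2*b * snd z * snd v + 2*k * inner (fst z) (fst v))
     + 2 * s * (b * (snd v)^2 + k * inner (fst v) (fst v))) (at s)"
  unfolding quad_fun_line by (auto intro!: derivative_eq_intros)

lemma pderiv_dir_quad_fun:
  "pderiv_dir v (quad_fun c w b k) = quad_fun (inner w v) ((2*k) *\<^sub>R fst v, 2*b * snd v) 0 0"
proof
  fix z
  have "pderiv_dir v (quad_fun c w b k) z = inner w v + 2*b * snd z * snd v + 2*k * inner (fst z) (fst v)"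
    unfolding pderiv_dir_def
    by (rule DERIV_imp_deriv) (use has_real_derivative_quad_fun_line[of c w b k z v 0] in simp)
  then show "pderiv_dir v (quad_fun c w b k) z = quad_fun (inner w v) ((2*k) *\<^sub>R fst v, 2*b * snd v) 0 0 z"
    by (simp add: quad_fun_def inner_prod_def inner_commute algebra_simps)
qed

lemma iter_pderiv_quad_fun: "\<exists>c' w' b' k'. iter_pderiv vs (quad_fun c w b k) = quad_fun c' w' b' k'"
proof (induction vs)
  case Nil
  show ?case by (intro exI) (rule iter_pderiv.simps(1))
next
  case (Cons v vs)
  then show ?case by (metis iter_pderiv.simps(2) pderiv_dir_quad_fun)
qed

lemma smooth_on_quad_fun: "smooth_on N (quad_fun c w b k)"
  unfolding smooth_on_def
proof (intro allI impI conjI ballI)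
  fix vs :: "('a::euclidean_space \<times> real) list"
  obtain c' w' b' k' where eq: "iter_pderiv vs (quad_fun c w b k) = quad_fun c' w' b' k'"
    using iter_pderiv_quad_fun by blast
  show "continuous_on N (iter_pderiv vs (quad_fun c w b k))"
    unfolding eq quad_fun_def by (intro continuous_intros)
  fix v x
  show "(\<lambda>s. iter_pderiv vs (quad_fun c w b k) (x + s *\<^sub>R v)) differentiable at 0"
    unfolding eq using has_real_derivative_quad_fun_line real_differentiable_def by blast
qed

lemma test_fun_quad_fun: "test_fun D p (quad_fun c w b k)"
  unfolding test_fun_def
  by (rule exI[of _ UNIV]) (auto simp: smooth_on_quad_fun lipschitz_on_def intro: exI[of _ 0])

lemma deriv_quad_fun_time: "deriv (\<lambda>s. quad_fun c w b k (x, s)) t = snd w + 2*b*t"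
proof (rule DERIV_imp_deriv)
  have "(\<lambda>s. quad_fun c w b k (x, s)) = (\<lambda>s. c + inner (fst w) x + snd w * s + b * s^2 + k * inner x x)"
    by (auto simp: quad_fun_def inner_prod_def algebra_simps)
  then show "((\<lambda>s. quad_fun c w b k (x, s)) has_real_derivative snd w + 2*b*t) (at t)"
    by (auto intro!: derivative_eq_intros)
qed

lemma quad_fun_uminus: "quad_fun (-c) (-w) (-b) (-k) z = - quad_fun c w b k z"
  by (simp add: quad_fun_def)

lemma quad_fun_centered:
  "quad_fun (m + k * inner x0 x0) ((-2*k) *\<^sub>R x0, 0) b k (x, t) = m + b * t^2 + k * (dist x x0)^2"
  by (simp add: quad_fun_def inner_prod_def dist_norm power2_norm_eq_inner inner_diff_left
      inner_diff_right inner_commute algebra_simps)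

lemma upper_semicontinuous_on_subset:
  "upper_semicontinuous_on S f \<Longrightarrow> T \<subseteq> S \<Longrightarrow> upper_semicontinuous_on T f"
  unfolding upper_semicontinuous_on_def by (meson filter_leD at_le subsetD)

lemma upper_semicontinuous_on_uminus:
  "lower_semicontinuous_on S f \<Longrightarrow> upper_semicontinuous_on S (\<lambda>z. - f z)"
  unfolding upper_semicontinuous_on_def lower_semicontinuous_on_def
  by (metis (no_types, lifting) eventually_mono minus_less_iff)

lemma upper_semicontinuous_on_diff:
  assumes usc: "upper_semicontinuous_on S f" and cont: "continuous_on S g"
  shows "upper_semicontinuous_on S (\<lambda>z. f z - g z)"
  unfolding upper_semicontinuous_on_def
proof (intro ballI allI impI)
  fix z a assume z: "z \<in> S" and lt: "f z - g z < a"
  define e where "e = (a - f z + g z) / 2"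
  have e: "e > 0" using lt by (simp add: e_def)
  have "\<forall>\<^sub>F y in at z within S. f y < f z + e"
    using usc z e unfolding upper_semicontinuous_on_def by auto
  moreover have "\<forall>\<^sub>F y in at z within S. g z - e < g y"
    using cont z e by (intro order_tendstoD(1)) (auto simp: continuous_on_def)
  ultimately show "\<forall>\<^sub>F y in at z within S. f y - g y < a"
    by eventually_elim (simp add: e_def field_simps)
qed

lemma upper_semicontinuous_on_attains_max:
  assumes "compact K" "K \<noteq> {}" and usc: "upper_semicontinuous_on K h"
  shows "\<exists>z\<in>K. \<forall>y\<in>K. h y \<le> h z"
proof (rule ccontr)
  assume "\<not> ?thesis"
  then obtain Y where Y: "\<And>z. z \<in> K \<Longrightarrow> Y z \<in> K \<and> h z < h (Y z)"
    by (metis not_le)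
  have "\<exists>V. open V \<and> z \<in> V \<and> (\<forall>y\<in>V \<inter> K. h y < h (Y z))" if z: "z \<in> K" for z
  proof -
    have "\<forall>\<^sub>F y in at z within K. h y < h (Y z)"
      using usc z Y[OF z] unfolding upper_semicontinuous_on_def by blast
    then obtain V where "open V" "z \<in> V" "\<forall>y\<in>V. y \<noteq> z \<longrightarrow> y \<in> K \<longrightarrow> h y < h (Y z)"
      unfolding eventually_at_topological by blast
    with Y[OF z] show ?thesis by (intro exI[of _ V]) auto
  qed
  then obtain V where V: "\<And>z. z \<in> K \<Longrightarrow> open (V z) \<and> z \<in> V z \<and> (\<forall>y\<in>V z \<inter> K. h y < h (Y z))"
    by metis
  obtain D where D: "D \<subseteq> K" "finite D" "K \<subseteq> (\<Union>z\<in>D. V z)"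
    using compactE_image[OF \<open>compact K\<close>, of K V] V by blast
  with \<open>K \<noteq> {}\<close> have "D \<noteq> {}" by auto
  \<comment> \<open>The best of the finitely many competitors Y z lies in some V z, so it is beaten by Y z.\<close>
  have "Max ((h \<circ> Y) ` D) \<in> (h \<circ> Y) ` D"
    using D(2) \<open>D \<noteq> {}\<close> by (intro Max_in) auto
  then obtain d where d: "d \<in> D" "h (Y d) = Max ((h \<circ> Y) ` D)" by auto
  have Yd_max: "h (Y z) \<le> h (Y d)" if "z \<in> D" for z
    unfolding d(2) using D(2) that by (intro Max_ge) auto
  have "Y d \<in> K" using Y d(1) D(1) by blast
  then obtain z where "z \<in> D" "Y d \<in> V z" using D(3) by blast
  then have "h (Y d) < h (Y z)" using V[of z] D(1) \<open>Y d \<in> K\<close> by blast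
  with Yd_max[OF \<open>z \<in> D\<close>] show False by simp
qed

lemma upper_semicontinuous_on_attains_positive_max:
  assumes "compact K" "K \<subseteq> D" and usc: "upper_semicontinuous_on D f"
    and out: "\<And>z. z \<in> D \<Longrightarrow> z \<notin> K \<Longrightarrow> f z \<le> 0"
    and "z0 \<in> D" "0 < f z0"
  shows "\<exists>p\<in>K. 0 < f p \<and> (\<forall>z\<in>D. f z \<le> f p)"
proof -
  have "z0 \<in> K" using out assms(5,6) by force
  obtain p where p: "p \<in> K" "\<And>z. z \<in> K \<Longrightarrow> f z \<le> f p"
    using upper_semicontinuous_on_attains_max[OF \<open>compact K\<close> _ upper_semicontinuous_on_subset[OF usc \<open>K \<subseteq> D\<close>]]
      \<open>z0 \<in> K\<close> by blast
  have "0 < f p" using p(2)[OF \<open>z0 \<in> K\<close>] \<open>0 < f z0\<close> by simp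
  moreover have "f z \<le> f p" if "z \<in> D" for z
    using p(2) out[OF that] \<open>0 < f p\<close> by (cases "z \<in> K") auto
  ultimately show ?thesis using p(1) by blast
qed

lemma linear_le_penalty_outside_cylinder:
  fixes x x0 :: "'a::metric_space"
  assumes "0 \<le> C" "0 \<le> \<beta>" "0 \<le> K" "0 \<le> r" "0 \<le> t"
    and "C \<le> \<beta> * T" "C * T \<le> K * r^2"
    and "(x, t) \<notin> cball x0 r \<times> {0..T}"
  shows "C * t \<le> \<beta> * t^2 + K * (dist x x0)^2"
proof (cases "T < t")
  case True
  have "C \<le> \<beta> * t"
    using assms(2,6) True by (meson less_imp_le mult_left_mono order_trans)
  then have "C * t \<le> \<beta> * t * t"
    using assms(5) by (rule mult_right_mono)
  then show ?thesis using assms(3) by (simp add: power2_eq_square add_increasing2)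
next
  case False
  then have "r < dist x x0" using assms(5,8) by (auto simp: dist_commute)
  then have "K * r^2 \<le> K * (dist x x0)^2"
    using assms(3,4) by (intro mult_left_mono power_mono) auto
  moreover have "C * t \<le> C * T" using False assms(1) by (simp add: mult_left_mono)
  ultimately show ?thesis using assms(2,7) by (simp add: add_increasing)
qed

definition quad_subsolution :: "'a::real_inner set \<Rightarrow> ('a \<Rightarrow> real \<Rightarrow> real) \<Rightarrow> bool" where
  "quad_subsolution U F \<longleftrightarrow>
     (\<forall>x0 t0 c w b k. x0 \<in> U \<longrightarrow> 0 < t0 \<longrightarrow>
        (\<forall>x\<in>U. \<forall>t\<ge>0. F x t \<le> quad_fun c w b k (x, t)) \<longrightarrow> F x0 t0 = quad_fun c w b k (x0, t0) \<longrightarrow>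
        F x0 t0 \<le> 0 \<or> snd w + 2 * b * t0 \<le> 0)"

lemma visc_min_sub_imp_quad_subsolution:
  assumes "visc_min_sub U F"
  shows "quad_subsolution U F"
  unfolding quad_subsolution_def
proof (intro allI impI)
  fix x0 t0 c w b k
  assume "x0 \<in> U" "(0::real) < t0"
    and "\<forall>x\<in>U. \<forall>t\<ge>0. F x t \<le> quad_fun c w b k (x, t)" "F x0 t0 = quad_fun c w b k (x0, t0)"
  then have "F x0 t0 \<le> 0 \<or> deriv (\<lambda>s. quad_fun c w b k (x0, s)) t0 \<le> 0"
    using assms[unfolded visc_min_sub_def, rule_format, OF _ _ test_fun_quad_fun] by simp
  then show "F x0 t0 \<le> 0 \<or> snd w + 2 * b * t0 \<le> 0"
    by (simp add: deriv_quad_fun_time)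
qed

lemma visc_max_super_imp_quad_subsolution:
  assumes "visc_max_super U G"
  shows "quad_subsolution U (\<lambda>x t. - G x t)"
  unfolding quad_subsolution_def
proof (intro allI impI)
  fix x0 t0 c w b k
  assume x0: "x0 \<in> U" "(0::real) < t0"
    and touch: "\<forall>x\<in>U. \<forall>t\<ge>0. - G x t \<le> quad_fun c w b k (x, t)" "- G x0 t0 = quad_fun c w b k (x0, t0)"
  let ?\<psi> = "quad_fun (-c) (-w) (-b) (-k)"
  have "\<forall>x\<in>U. \<forall>t\<ge>0. G x t - ?\<psi> (x, t) \<ge> 0" "G x0 t0 - ?\<psi> (x0, t0) = 0"
    using touch by (force simp: quad_fun_uminus)+
  then have "G x0 t0 \<ge> 0 \<or> deriv (\<lambda>s. ?\<psi> (x0, s)) t0 \<ge> 0"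
    using assms[unfolded visc_max_super_def, rule_format, OF x0 test_fun_quad_fun] by blast
  then show "- G x0 t0 \<le> 0 \<or> snd w + 2 * b * t0 \<le> 0"
    by (auto simp: deriv_quad_fun_time)
qed

lemma quad_subsolution_nonpos_at_penalized_max:
  fixes F :: "'a::real_inner \<Rightarrow> real \<Rightarrow> real"
  assumes sub: "quad_subsolution U F" and "0 < \<beta>" "y \<in> U" "0 < s"
    and max: "\<And>x t. x \<in> U \<Longrightarrow> 0 \<le> t \<Longrightarrow>
      F x t - (\<beta> * t^2 + K * (dist x z)^2) \<le> F y s - (\<beta> * s^2 + K * (dist y z)^2)"
  shows "F y s \<le> 0"
proof -
  define m where "m = F y s - (\<beta> * s^2 + K * (dist y z)^2)"
  define \<psi> where "\<psi> = quad_fun (m + K * inner z z) ((-2*K) *\<^sub>R z, 0) \<beta> K"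
  have \<psi>: "\<psi> (x, t) = m + \<beta> * t^2 + K * (dist x z)^2" for x t
    unfolding \<psi>_def by (rule quad_fun_centered)
  have above: "F x t \<le> \<psi> (x, t)" if "x \<in> U" "0 \<le> t" for x t
    using max[OF that] by (simp add: \<psi> m_def)
  have touch: "F y s = \<psi> (y, s)"
    by (simp add: \<psi> m_def)
  have "F y s \<le> 0 \<or> snd ((-2*K) *\<^sub>R z, 0::real) + 2 * \<beta> * s \<le> 0"
    by (rule sub[unfolded quad_subsolution_def, rule_format, OF \<open>y \<in> U\<close> \<open>0 < s\<close>
          above[unfolded \<psi>_def] touch[unfolded \<psi>_def]])
  then show ?thesis
    using mult_pos_pos[OF \<open>0 < \<beta>\<close> \<open>0 < s\<close>] by simp
qed

lemma quad_subsolution_nonpos: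
  fixes U :: "'a::euclidean_space set" and F :: "'a \<Rightarrow> real \<Rightarrow> real"
  assumes "open U" and usc: "upper_semicontinuous_on (U \<times> {0..}) (\<lambda>(x, t). F x t)"
    and "0 \<le> C" and bound: "\<And>x t. x \<in> U \<Longrightarrow> t \<ge> 0 \<Longrightarrow> F x t \<le> C * t"
    and sub: "quad_subsolution U F" and "x0 \<in> U" "0 \<le> t0"
  shows "F x0 t0 \<le> 0"
proof (rule ccontr)
  define \<delta> where "\<delta> = F x0 t0"
  assume "\<not> F x0 t0 \<le> 0"
  then have "0 < \<delta>" by (simp add: \<delta>_def)
  then have "0 < t0" using bound[OF \<open>x0 \<in> U\<close> \<open>0 \<le> t0\<close>] \<open>0 \<le> t0\<close> by (cases "t0 = 0") (auto simp: \<delta>_def)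
  obtain r where r: "0 < r" "cball x0 r \<subseteq> U" using open_contains_cball \<open>open U\<close> \<open>x0 \<in> U\<close> by blast
  define \<beta> where "\<beta> = \<delta> / (2 * t0^2)"
  define T where "T = C / \<beta>"
  define K where "K = C * T / r^2"
  have "0 < \<beta>" "0 \<le> K" "C = \<beta> * T" "C * T = K * r^2"
    using \<open>0 < \<delta>\<close> \<open>0 < t0\<close> \<open>0 \<le> C\<close> r(1) by (auto simp: \<beta>_def T_def K_def)
  define \<Phi> where "\<Phi> = (\<lambda>(x, t). F x t - (\<beta> * t^2 + K * (dist x x0)^2))"
  have "\<Phi> (x, t) \<le> 0" if "(x, t) \<in> U \<times> {0..}" "(x, t) \<notin> cball x0 r \<times> {0..T}" for x t
    using linear_le_penalty_outside_cylinder[of C \<beta> K r t T x x0] bound[of x t] that r(1)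
      \<open>0 \<le> C\<close> \<open>0 < \<beta>\<close> \<open>0 \<le> K\<close> \<open>C = \<beta> * T\<close> \<open>C * T = K * r^2\<close>
    by (auto simp: \<Phi>_def)
  moreover have "upper_semicontinuous_on (U \<times> {0..}) \<Phi>"
    using upper_semicontinuous_on_diff[OF usc, of "\<lambda>(x, t). \<beta> * t^2 + K * (dist x x0)^2"]
    unfolding \<Phi>_def case_prod_beta' by (force intro: continuous_intros)
  moreover have "\<Phi> (x0, t0) = \<delta> / 2"
    using \<open>0 < t0\<close> by (simp add: \<Phi>_def \<beta>_def \<delta>_def field_simps power2_eq_square)
  ultimately obtain x1 t1 where max: "(x1, t1) \<in> cball x0 r \<times> {0..T}" "0 < \<Phi> (x1, t1)"
      "\<And>z. z \<in> U \<times> {0..} \<Longrightarrow> \<Phi> z \<le> \<Phi> (x1, t1)"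
    using upper_semicontinuous_on_attains_positive_max[of "cball x0 r \<times> {0..T}" "U \<times> {0..}" \<Phi> "(x0, t0)"]
      r(2) \<open>x0 \<in> U\<close> \<open>0 \<le> t0\<close> \<open>0 < \<delta>\<close> by (force intro: compact_Times)
  have "x1 \<in> U" "0 \<le> t1" using max(1) r(2) by auto
  have "0 \<le> \<beta> * t1^2 + K * (dist x1 x0)^2"
    using \<open>0 < \<beta>\<close> \<open>0 \<le> K\<close> by simp
  then have "0 < F x1 t1" using max(2) by (simp add: \<Phi>_def)
  moreover have "0 < t1"
    using \<open>0 < F x1 t1\<close> bound[OF \<open>x1 \<in> U\<close> \<open>0 \<le> t1\<close>] \<open>0 \<le> t1\<close> by (cases "t1 = 0") auto
  then have "F x1 t1 \<le> 0"
  proof (rule quad_subsolution_nonpos_at_penalized_max[OF sub \<open>0 < \<beta>\<close> \<open>x1 \<in> U\<close>])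
    fix x t assume "x \<in> U" "(0::real) \<le> t"
    then show "F x t - (\<beta> * t^2 + K * (dist x x0)^2) \<le> F x1 t1 - (\<beta> * t1^2 + K * (dist x1 x0)^2)"
      using max(3)[of "(x, t)"] by (simp add: \<Phi>_def)
  qed
  ultimately show False by simp
qed

theorem lemma3p3:
  fixes U :: "(real^'d) set" and F G :: "real^'d \<Rightarrow> real \<Rightarrow> real" and C :: real
  assumes "open U"
    and "upper_semicontinuous_on (U \<times> {0..}) (\<lambda>(x, t). F x t)"
    and "lower_semicontinuous_on (U \<times> {0..}) (\<lambda>(x, t). G x t)"
    and "C > 0"
    and "\<And>x t. x \<in> U \<Longrightarrow> t \<ge> 0 \<Longrightarrow> F x t \<le> C * t"
    and "\<And>x t. x \<in> U \<Longrightarrow> t \<ge> 0 \<Longrightarrow> G x t \<ge> - C * t"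
    and "visc_min_sub U F"
    and "visc_max_super U G"
  shows "\<forall>x\<in>U. \<forall>t\<ge>0. F x t \<le> 0 \<and> G x t \<ge> 0"
proof (intro ballI allI impI conjI)
  fix x t assume xt: "x \<in> U" "(t::real) \<ge> 0"
  show "F x t \<le> 0"
    using quad_subsolution_nonpos[OF assms(1,2) _ assms(5) visc_min_sub_imp_quad_subsolution[OF assms(7)] xt]
      assms(4) by simp
  have usc_neg_G: "upper_semicontinuous_on (U \<times> {0..}) (\<lambda>(x, t). - G x t)"
    using upper_semicontinuous_on_uminus[OF assms(3)] by (simp add: case_prod_beta')
  have bound_neg_G: "- G x t \<le> C * t" if "x \<in> U" "t \<ge> 0" for x t
    using assms(6)[OF that] by simp
  have "- G x t \<le> 0"
    using quad_subsolution_nonpos[OF assms(1) usc_neg_G _ bound_neg_G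
        visc_max_super_imp_quad_subsolution[OF assms(8)] xt] assms(4) by simp
  then show "G x t \<ge> 0" by simp
qed

end
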